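(* Let $v_1,\dots,v_m$ be nonzero vectors spanning $\mathbb{R}^n$ ($m\ge n$), let $c=(c_i)_{i=1}^m$ with $c_i>0$ and $\sum_i c_i=n$, and let $D_c=\inf\{\det(\sum_i\lambda_iv_i\otimes v_i)/\prod_i\lambda_i^{c_i};\ \lambda_i>0\}$. For $I\subset\{1,\dots,m\}$ with $|I|=n$ let $d_I=\det((v_i)_{i\in I})^2$. Then the infimum $D_c$ is attained at some $m$-tuple of positive numbers if and only if there exist non-negative numbers $(t_I)_{|I|=n}$ and positive numbers $(\lambda_i)_{i=1}^m$ such that $$c=\sum_{|I|=n}t_I1_I\qquad\text{and}\qquad t_I=d_I\prod_{i\in I}\lambda_i\ \text{ for all } I.$$
   Context: $1_I\in\mathbb{R}^m$ is the indicator vector of $I$; $v\otimes v=vv^T$; $\det((v_i)_{i\in I})$ is the determinant of the $n\times n$ matrix with columns $v_i$, $i\in I$ (its square does not depend on the ordering). *)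

theory Defs
  imports "HOL-Analysis.Analysis"
begin

definition outer :: "real^'n \<Rightarrow> real^'n^'n" where
  "outer v = (\<chi> a b. v $ a * v $ b)"

definition BL_ratio :: "nat \<Rightarrow> (nat \<Rightarrow> real^'n) \<Rightarrow> (nat \<Rightarrow> real) \<Rightarrow> (nat \<Rightarrow> real) \<Rightarrow> real" where
  "BL_ratio m v c lam =
     det (\<Sum>i<m. lam i *\<^sub>R outer (v i)) / (\<Prod>i<m. lam i powr c i)"

definition D_const :: "nat \<Rightarrow> (nat \<Rightarrow> real^'n) \<Rightarrow> (nat \<Rightarrow> real) \<Rightarrow> real" where
  "D_const m v c = Inf {BL_ratio m v c lam | lam. \<forall>i<m. lam i > 0}"

text \<open>Square of the determinant of the n x n matrix with columns v_i, i \<in> I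
  (columns ordered by an arbitrary bijection from the index type onto I; the
  square does not depend on the ordering).\<close>
definition dI :: "(nat \<Rightarrow> real^'n) \<Rightarrow> nat set \<Rightarrow> real" where
  "dI v I = (let f = (SOME f :: 'n \<Rightarrow> nat. bij_betw f UNIV I)
             in (det (\<chi> a b. v (f b) $ a)) ^ 2)"

end

theory Submission
  imports Defs
begin

text \<open>
  By the Cauchy--Binet formula, det (\<Sum>i. lam_i v_i v_i^T) is the polynomial
  P(lam) = \<Sum>_{|I| = n} d_I lam^I, where lam^I = \<Prod>_{i \<in> I} lam_i; it has nonnegative
  coefficients, is homogeneous of degree n and is affine in each lam_i.

  If c = \<Sum>_I t_I 1_I with t_I = d_I lam^I, then \<Sum>_I t_I = 1 because \<Sum>_i c_i = n = |I|.
  Thus P(lam) = 1, and Jensen's inequality for ln with the weights t_I gives, for every mu > 0,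
  ln P(mu) \<ge> \<Sum>_I t_I ln (mu^I / lam^I) = \<Sum>_i c_i ln (mu_i / lam_i): lam minimises the ratio.
  Conversely, at a minimiser lam the ratio, as a function of lam_i alone, is a multiple of
  (A + s B) s^(-c_i), and its vanishing derivative says c_i P(lam) = \<Sum>_{I \<ni> i} d_I lam^I;
  rescaling lam so that P(lam) = 1 turns this into the required decomposition of c.
\<close>

abbreviation card_subsets :: "nat \<Rightarrow> nat \<Rightarrow> nat set set" where
  "card_subsets m k \<equiv> {I. I \<subseteq> {..<m} \<and> card I = k}"

definition det_poly :: "nat \<Rightarrow> (nat \<Rightarrow> real^'n) \<Rightarrow> (nat \<Rightarrow> real) \<Rightarrow> real" where
  "det_poly m v lam = (\<Sum>I\<in>card_subsets m CARD('n). dI v I * prod lam I)"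

lemma finite_card_subsets: "finite (card_subsets m k)"
  by (rule finite_subset[of _ "Pow {..<m}"]) auto

lemma obtain_bij_betw_UNIV:
  assumes "card I = CARD('n::finite)"
  obtains f :: "'n::finite \<Rightarrow> 'a" where "bij_betw f UNIV I"
proof -
  have "finite I"
    using assms card.infinite by fastforce
  then show thesis
    using assms that by (metis finite finite_same_card_bij)
qed

lemma dI_nonneg: "dI v I \<ge> 0"
  unfolding dI_def Let_def by simp

lemma dI_eq_det_rows:
  fixes v :: "nat \<Rightarrow> real^'n"
  assumes f: "bij_betw f (UNIV::'n set) I"
  shows "dI v I = (det (\<chi> a. v (f a))) ^ 2"
proof -
  define g where "g = (SOME f :: 'n \<Rightarrow> nat. bij_betw f UNIV I)"
  have g: "bij_betw g (UNIV::'n set) I"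
    unfolding g_def by (rule someI[of _ f]) (rule f)
  have "(\<chi> a b. v (g b) $ a) = transpose (\<chi> a. v (g a))"
    by (simp add: transpose_def vec_eq_iff)
  then have dI_g: "dI v I = (det (\<chi> a. v (g a))) ^ 2"
    unfolding dI_def g_def Let_def by (metis det_transpose)
  define p where "p = inv_into UNIV f \<circ> g"
  have p: "p permutes UNIV"
    unfolding p_def using f g
    by (intro bij_imp_permutes) (auto intro: bij_betw_trans bij_betw_inv_into)
  have "g = f \<circ> p"
    using f g unfolding p_def by (auto simp: fun_eq_iff bij_betw_def) (metis f_inv_into_f rangeI)
  then have "det (\<chi> a. v (g a)) = of_int (sign p) * det (\<chi> a. v (f a))"
    using det_permute_rows[OF p, of "\<chi> a. v (f a)"] by simp
  then show ?thesis
    using dI_g by (simp add: power_mult_distrib sign_def)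
qed

lemma ex_dI_pos:
  fixes v :: "nat \<Rightarrow> real^'n"
  assumes spans: "span (v ` {..<m}) = UNIV"
  shows "\<exists>I\<in>card_subsets m CARD('n). dI v I > 0"
proof -
  obtain B where B: "B \<subseteq> v ` {..<m}" "independent B" "v ` {..<m} \<subseteq> span B"
    by (rule maximal_independent_subset)
  have "card B = dim (span (v ` {..<m}))"
    using basis_card_eq_dim[OF B(1) B(3) B(2)] by simp
  then have card_B: "card B = CARD('n)"
    unfolding spans by simp
  obtain I where I: "I \<subseteq> {..<m}" "inj_on v I" "B = v ` I"
    using B(1) subset_image_inj by metis
  have card_I: "card I = CARD('n)"
    using card_B I by (simp add: card_image)
  then obtain f :: "'n \<Rightarrow> nat" where f: "bij_betw f UNIV I"
    by (rule obtain_bij_betw_UNIV)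
  define W where "W = (\<chi> a. v (f a))"
  have "rows W = B"
    using f I(3) unfolding W_def rows_def row_def bij_betw_def by auto
  then have "span (rows W) = UNIV"
    using B(3) spans by (metis span_mono span_span top.extremum_uniqueI)
  then have "det W \<noteq> 0"
    using matrix_left_invertible_span_rows invertible_left_inverse invertible_det_nz by blast
  then have "dI v I > 0"
    using dI_eq_det_rows[OF f, of v] W_def by simp
  then show ?thesis
    using I card_I by blast
qed

lemma det_rows_sum:
  fixes a :: "'n \<Rightarrow> 'b \<Rightarrow> 'a::comm_ring_1^'n"
  assumes "finite S"
  shows "det (\<chi> i. \<Sum>j\<in>S. a i j) = (\<Sum>g\<in>UNIV \<rightarrow>\<^sub>E S. det (\<chi> i. a i (g i)))"
proof -
  have "det (\<chi> i. \<Sum>j\<in>S. a i j) =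
      (\<Sum>p | p permutes UNIV. of_int (sign p) * (\<Prod>i\<in>UNIV. \<Sum>j\<in>S. a i j $ p i))"
    by (simp add: det_def sum_component)
  also have "\<dots> = (\<Sum>p | p permutes UNIV. \<Sum>g\<in>UNIV \<rightarrow>\<^sub>E S.
                     of_int (sign p) * (\<Prod>i\<in>UNIV. a i (g i) $ p i))"
    by (simp add: prod_sum_PiE assms sum_distrib_left)
  also have "\<dots> = (\<Sum>g\<in>UNIV \<rightarrow>\<^sub>E S. det (\<chi> i. a i (g i)))"
    by (subst sum.swap) (simp add: det_def)
  finally show ?thesis .
qed

lemma sum_injections_onto_eq_dI:
  fixes v :: "nat \<Rightarrow> real^'n" and lam :: "nat \<Rightarrow> real"
  assumes card_I: "card I = CARD('n)"
  shows "(\<Sum>g | inj g \<and> range g = I. (\<Prod>a\<in>UNIV. lam (g a) * v (g a) $ a) * det (\<chi> a. v (g a)))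
         = dI v I * prod lam I"
proof -
  obtain f :: "'n \<Rightarrow> nat" where f: "bij_betw f UNIV I"
    using card_I by (rule obtain_bij_betw_UNIV)
  define W where "W = (\<chi> a. v (f a))"
  have f_inv: "f (inv_into UNIV f x) = x" if "x \<in> I" for x
    using f that by (metis bij_betw_imp_surj_on f_inv_into_f)
  have "(\<Sum>g | inj g \<and> range g = I. (\<Prod>a\<in>UNIV. lam (g a) * v (g a) $ a) * det (\<chi> a. v (g a)))
      = (\<Sum>p | p permutes UNIV.
           (\<Prod>a\<in>UNIV. lam (f (p a)) * v (f (p a)) $ a) * det (\<chi> a. v (f (p a))))"
  proof (rule sum.reindex_bij_witness[where i="\<lambda>p. f \<circ> p" and j="\<lambda>g. inv_into UNIV f \<circ> g"])
    fix p assume "p \<in> {p. p permutes (UNIV::'n set)}"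
    then have "p permutes UNIV"
      by simp
    then have "bij_betw (f \<circ> p) UNIV I"
      using f by (meson bij_betw_trans permutes_imp_bij)
    then show "f \<circ> p \<in> {g. inj g \<and> range g = I}"
      by (auto simp: bij_betw_def)
    show "inv_into UNIV f \<circ> (f \<circ> p) = p"
      using f by (auto simp: fun_eq_iff bij_betw_def)
  next
    fix g assume "g \<in> {g::'n \<Rightarrow> nat. inj g \<and> range g = I}"
    then have g: "bij_betw g UNIV I"
      by (auto simp: bij_betw_def)
    then have f_inv_g: "f (inv_into UNIV f (g a)) = g a" for a
      using f_inv bij_betwE by blast
    then show "f \<circ> (inv_into UNIV f \<circ> g) = g"
      by (simp add: fun_eq_iff)
    show "inv_into UNIV f \<circ> g \<in> {p. p permutes UNIV}"
      using f g by (auto intro!: bij_imp_permutes intro: bij_betw_trans bij_betw_inv_into)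
    show "(\<Prod>a\<in>UNIV. lam (f ((inv_into UNIV f \<circ> g) a)) * v (f ((inv_into UNIV f \<circ> g) a)) $ a)
          * det (\<chi> a. v (f ((inv_into UNIV f \<circ> g) a)))
        = (\<Prod>a\<in>UNIV. lam (g a) * v (g a) $ a) * det (\<chi> a. v (g a))"
      by (simp add: f_inv_g)
  qed
  also have "\<dots> = (\<Sum>p | p permutes UNIV.
                     prod lam I * det W * (of_int (sign p) * (\<Prod>a\<in>UNIV. W $ p a $ a)))"
  proof (rule sum.cong[OF refl])
    fix p assume "p \<in> {p. p permutes (UNIV::'n set)}"
    then have p: "p permutes UNIV"
      by simp
    have "bij_betw (f \<circ> p) UNIV I"
      using f p by (meson bij_betw_trans permutes_imp_bij)
    then have "(\<Prod>a\<in>UNIV. lam (f (p a))) = prod lam I"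
      using prod.reindex_bij_betw by fastforce
    moreover have "det (\<chi> a. v (f (p a))) = of_int (sign p) * det W"
      unfolding W_def using det_permute_rows[OF p, of "\<chi> a. v (f a)"] by simp
    ultimately show "(\<Prod>a\<in>UNIV. lam (f (p a)) * v (f (p a)) $ a) * det (\<chi> a. v (f (p a))) =
        prod lam I * det W * (of_int (sign p) * (\<Prod>a\<in>UNIV. W $ p a $ a))"
      by (simp add: prod.distrib W_def)
  qed
  also have "\<dots> = prod lam I * det W * det (transpose W)"
    by (simp add: sum_distrib_left det_def transpose_def)
  also have "\<dots> = dI v I * prod lam I"
    using dI_eq_det_rows[OF f, of v] by (simp add: W_def power2_eq_square)
  finally show ?thesis .
qed

theorem det_sum_outer_eq_det_poly:
  fixes v :: "nat \<Rightarrow> real^'n"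
  shows "det (\<Sum>i<m. lam i *\<^sub>R outer (v i)) = det_poly m v lam"
proof -
  let ?G = "UNIV \<rightarrow>\<^sub>E {..<m} :: ('n \<Rightarrow> nat) set"
  let ?F = "\<lambda>g::'n \<Rightarrow> nat. (\<Prod>a\<in>UNIV. lam (g a) * v (g a) $ a) * det (\<chi> a. v (g a))"
  have rows: "(\<Sum>i<m. lam i *\<^sub>R outer (v i)) = (\<chi> a. \<Sum>i<m. (lam i * v i $ a) *s v i)"
    by (simp add: vec_eq_iff outer_def sum_component mult.assoc)
  have "det (\<Sum>i<m. lam i *\<^sub>R outer (v i)) = sum ?F ?G"
    unfolding rows det_rows_sum[OF finite_lessThan] by (simp add: det_rows_mul)
  also have "\<dots> = sum ?F {g\<in>?G. inj g}"
  proof (rule sum.mono_neutral_right)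
    show "\<forall>g\<in>?G - {g\<in>?G. inj g}. ?F g = 0"
    proof
      fix g assume "g \<in> ?G - {g\<in>?G. inj g}"
      then obtain a b where ab: "a \<noteq> b" "g a = g b"
        by (auto simp: inj_def)
      have "det (\<chi> a. v (g a)) = 0"
        by (rule det_identical_rows[OF ab(1)]) (simp add: row_def ab(2))
      then show "?F g = 0"
        by simp
    qed
  qed (auto simp: finite_PiE)
  also have "\<dots> = (\<Sum>I\<in>card_subsets m CARD('n). sum ?F {g\<in>{g\<in>?G. inj g}. range g = I})"
    by (rule sum.group[symmetric]) (auto simp: finite_PiE finite_card_subsets card_image)
  also have "\<dots> = det_poly m v lam"
    unfolding det_poly_def
  proof (rule sum.cong[OF refl])
    fix I assume I: "I \<in> card_subsets m CARD('n)"
    then have "{g\<in>{g\<in>?G. inj g}. range g = I} = {g. inj g \<and> range g = I}"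
      by auto
    then show "sum ?F {g\<in>{g\<in>?G. inj g}. range g = I} = dI v I * prod lam I"
      using I by (simp add: sum_injections_onto_eq_dI)
  qed
  finally show ?thesis .
qed

lemma BL_ratio_eq_det_poly:
  "BL_ratio m v c lam = det_poly m v lam / (\<Prod>i<m. lam i powr c i)"
  by (simp add: BL_ratio_def det_sum_outer_eq_det_poly)

lemma det_poly_nonneg:
  assumes "\<forall>i<m. lam i \<ge> 0"
  shows "det_poly m v lam \<ge> 0"
  unfolding det_poly_def using assms
  by (intro sum_nonneg mult_nonneg_nonneg dI_nonneg prod_nonneg) auto

lemma det_poly_pos:
  fixes v :: "nat \<Rightarrow> real^'n"
  assumes "span (v ` {..<m}) = UNIV" and "\<forall>i<m. lam i > 0"
  shows "det_poly m v lam > 0"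
proof -
  obtain I0 where I0: "I0 \<in> card_subsets m CARD('n)" "dI v I0 > 0"
    using ex_dI_pos[OF assms(1)] by blast
  show ?thesis
    unfolding det_poly_def
  proof (rule sum_pos2[OF finite_card_subsets I0(1)])
    show "dI v I0 * prod lam I0 > 0"
      using I0 assms(2) by (intro mult_pos_pos prod_pos) auto
    show "dI v I * prod lam I \<ge> 0" if "I \<in> card_subsets m CARD('n)" for I
      using that assms(2) by (intro mult_nonneg_nonneg dI_nonneg prod_nonneg) (auto simp: less_imp_le)
  qed
qed

lemma BL_ratio_nonneg:
  assumes "\<forall>i<m. lam i > 0"
  shows "BL_ratio m v c lam \<ge> 0"
  unfolding BL_ratio_eq_det_poly using assms
  by (intro divide_nonneg_pos det_poly_nonneg prod_pos) (auto simp: less_imp_le)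

lemma BL_ratio_eq_D_const_iff:
  assumes "\<forall>i<m. lam i > 0"
  shows "BL_ratio m v c lam = D_const m v c \<longleftrightarrow>
    (\<forall>mu. (\<forall>i<m. mu i > 0) \<longrightarrow> BL_ratio m v c lam \<le> BL_ratio m v c mu)"
proof
  assume "BL_ratio m v c lam = D_const m v c"
  moreover have "bdd_below {BL_ratio m v c mu | mu. \<forall>i<m. mu i > 0}"
    by (rule bdd_belowI[of _ 0]) (auto intro: BL_ratio_nonneg)
  ultimately show "\<forall>mu. (\<forall>i<m. mu i > 0) \<longrightarrow> BL_ratio m v c lam \<le> BL_ratio m v c mu"
    unfolding D_const_def by (auto intro: cInf_lower)
next
  assume "\<forall>mu. (\<forall>i<m. mu i > 0) \<longrightarrow> BL_ratio m v c lam \<le> BL_ratio m v c mu"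
  then show "BL_ratio m v c lam = D_const m v c"
    unfolding D_const_def by (intro cInf_eq_minimum[symmetric]) (use assms in auto)
qed

lemma sum_mult_eq_sum_over_decomposition:
  fixes t :: "nat set \<Rightarrow> real"
  assumes "\<forall>i<m. c i = (\<Sum>I\<in>card_subsets m k. t I * indicator I i)"
  shows "(\<Sum>i<m. c i * r i) = (\<Sum>I\<in>card_subsets m k. t I * sum r I)"
proof -
  have "(\<Sum>i<m. c i * r i) = (\<Sum>i<m. \<Sum>I\<in>card_subsets m k. t I * (indicator I i * r i))"
    using assms by (simp add: sum_distrib_right mult.assoc del: sum_mult_indicator)
  also have "\<dots> = (\<Sum>I\<in>card_subsets m k. \<Sum>i<m. t I * (indicator I i * r i))"
    by (rule sum.swap)
  also have "\<dots> = (\<Sum>I\<in>card_subsets m k. t I * sum r I)"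
  proof (intro sum.cong refl)
    fix I assume "I \<in> card_subsets m k"
    then have "(\<Sum>i<m. indicator I i * r i) = (\<Sum>i\<in>I. indicator I i * r i)"
      by (intro sum.mono_neutral_right) (auto simp: finite_subset)
    also have "\<dots> = sum r I"
      by (intro sum.cong) auto
    finally show "(\<Sum>i<m. t I * (indicator I i * r i)) = t I * sum r I"
      by (simp only: sum_distrib_left[symmetric])
  qed
  finally show ?thesis .
qed

lemma decomposition_weights_sum_eq_1:
  fixes t :: "nat set \<Rightarrow> real"
  assumes "(\<Sum>i<m. c i) = real k" and "k > 0"
    and "\<forall>i<m. c i = (\<Sum>I\<in>card_subsets m k. t I * indicator I i)"
  shows "sum t (card_subsets m k) = 1"
proof -
  have "real k = (\<Sum>i<m. c i * 1)"
    using assms(1) by simp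
  also have "\<dots> = (\<Sum>I\<in>card_subsets m k. t I * real (card I))"
    unfolding sum_mult_eq_sum_over_decomposition[OF assms(3)] by simp
  also have "\<dots> = sum t (card_subsets m k) * real k"
    by (simp add: sum_distrib_right)
  finally show ?thesis
    using assms(2) by simp
qed

lemma ln_prod_powr:
  fixes mu c :: "nat \<Rightarrow> real"
  assumes "\<forall>i<m. mu i > 0"
  shows "ln (\<Prod>i<m. mu i powr c i) = (\<Sum>i<m. c i * ln (mu i))"
  using assms by (subst ln_prod) auto

lemma ln_prod_divide_prod:
  fixes f g :: "'a \<Rightarrow> real"
  assumes "finite I" and "\<forall>i\<in>I. f i > 0" and "\<forall>i\<in>I. g i > 0"
  shows "ln (prod f I / prod g I) = (\<Sum>i\<in>I. ln (f i) - ln (g i))"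
proof -
  have "ln (prod f I) = (\<Sum>i\<in>I. ln (f i))" "ln (prod g I) = (\<Sum>i\<in>I. ln (g i))"
    using assms by (auto intro!: ln_prod)
  then show ?thesis
    using assms by (simp add: ln_divide_pos prod_pos sum_subtractf)
qed

lemma convex_combination_pos:
  fixes a x :: "'a \<Rightarrow> real"
  assumes "finite S" and "sum a S = 1" and "\<And>i. i \<in> S \<Longrightarrow> a i \<ge> 0" and "\<And>i. i \<in> S \<Longrightarrow> x i > 0"
  shows "(\<Sum>i\<in>S. a i * x i) > 0"
proof -
  have "\<exists>i\<in>S. a i > 0"
  proof (rule ccontr)
    assume "\<not> (\<exists>i\<in>S. a i > 0)"
    then have "sum a S \<le> 0"
      by (intro sum_nonpos) (simp add: not_less)
    then show False
      using assms(2) by simp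
  qed
  then obtain i where "i \<in> S" "a i > 0"
    by blast
  then show ?thesis
    using assms by (intro sum_pos2[of S i]) (auto simp: less_imp_le)
qed

lemma prod_powr_le_det_poly_if_decomposition:
  fixes v :: "nat \<Rightarrow> real^'n" and t :: "nat set \<Rightarrow> real"
  assumes c_sum: "(\<Sum>i<m. c i) = real CARD('n)"
    and lam_pos: "\<forall>i<m. lam i > 0" and mu_pos: "\<forall>i<m. mu i > 0"
    and t_nonneg: "\<And>I. I \<in> card_subsets m CARD('n) \<Longrightarrow> t I \<ge> 0"
    and c_eq: "\<forall>i<m. c i = (\<Sum>I\<in>card_subsets m CARD('n). t I * indicator I i)"
    and t_eq: "\<And>I. I \<in> card_subsets m CARD('n) \<Longrightarrow> t I = dI v I * prod lam I"
  shows "(\<Prod>i<m. mu i powr c i) / (\<Prod>i<m. lam i powr c i) \<le> det_poly m v mu"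
proof -
  let ?T = "card_subsets m CARD('n)"
  define x where "x I = prod mu I / prod lam I" for I
  have weights: "sum t ?T = 1"
    using decomposition_weights_sum_eq_1[OF c_sum _ c_eq] by simp
  then have T_ne: "?T \<noteq> {}"
    by (metis sum.empty zero_neq_one)
  have pos_on_I: "finite I" "\<forall>i\<in>I. mu i > 0" "\<forall>i\<in>I. lam i > 0" if "I \<in> ?T" for I
    using that lam_pos mu_pos finite_subset by auto
  have x_pos: "x I > 0" if "I \<in> ?T" for I
    using pos_on_I[OF that] unfolding x_def by (auto intro!: divide_pos_pos prod_pos)
  have "t I * x I = dI v I * prod mu I" if "I \<in> ?T" for I
    using t_eq[OF that] pos_on_I[OF that] by (simp add: x_def prod_pos less_imp_neq[symmetric])
  then have det_poly_mu: "(\<Sum>I\<in>?T. t I * x I) = det_poly m v mu"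
    unfolding det_poly_def by (rule sum.cong[OF refl])
  have "ln (\<Prod>i<m. mu i powr c i) - ln (\<Prod>i<m. lam i powr c i)
      = (\<Sum>i<m. c i * (ln (mu i) - ln (lam i)))"
    using lam_pos mu_pos by (simp add: ln_prod_powr sum_subtractf right_diff_distrib)
  also have "\<dots> = (\<Sum>I\<in>?T. t I * (\<Sum>i\<in>I. ln (mu i) - ln (lam i)))"
    by (rule sum_mult_eq_sum_over_decomposition[OF c_eq])
  also have "\<dots> = (\<Sum>I\<in>?T. t I * ln (x I))"
    using pos_on_I by (simp add: x_def ln_prod_divide_prod)
  also have "\<dots> \<le> ln (\<Sum>I\<in>?T. t I * x I)"
    using concave_on_sum[OF finite_card_subsets T_ne ln_concave weights t_nonneg, of x] x_pos by simp
  finally have "ln ((\<Prod>i<m. mu i powr c i) / (\<Prod>i<m. lam i powr c i)) \<le> ln (det_poly m v mu)"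
    using lam_pos mu_pos det_poly_mu by (subst ln_divide_pos) (auto intro!: prod_pos)
  moreover have "det_poly m v mu > 0"
    using convex_combination_pos[where x = x, OF finite_card_subsets weights t_nonneg x_pos] det_poly_mu
    by simp
  ultimately show ?thesis
    using lam_pos mu_pos by (subst (asm) ln_le_cancel_iff) (auto intro!: divide_pos_pos prod_pos)
qed

lemma BL_ratio_minimal_if_decomposition:
  fixes v :: "nat \<Rightarrow> real^'n" and t :: "nat set \<Rightarrow> real"
  assumes c_sum: "(\<Sum>i<m. c i) = real CARD('n)"
    and lam_pos: "\<forall>i<m. lam i > 0"
    and t_nonneg: "\<And>I. I \<in> card_subsets m CARD('n) \<Longrightarrow> t I \<ge> 0"
    and c_eq: "\<forall>i<m. c i = (\<Sum>I\<in>card_subsets m CARD('n). t I * indicator I i)"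
    and t_eq: "\<And>I. I \<in> card_subsets m CARD('n) \<Longrightarrow> t I = dI v I * prod lam I"
  shows "\<forall>mu. (\<forall>i<m. mu i > 0) \<longrightarrow> BL_ratio m v c lam \<le> BL_ratio m v c mu"
proof (intro allI impI)
  fix mu :: "nat \<Rightarrow> real" assume mu_pos: "\<forall>i<m. mu i > 0"
  have "det_poly m v lam = sum t (card_subsets m CARD('n))"
    unfolding det_poly_def by (rule sum.cong[OF refl]) (simp add: t_eq)
  then have det_poly_lam: "det_poly m v lam = 1"
    using decomposition_weights_sum_eq_1[OF c_sum _ c_eq] by simp
  have "(\<Prod>i<m. mu i powr c i) > 0" "(\<Prod>i<m. lam i powr c i) > 0"
    using lam_pos mu_pos by (auto intro!: prod_pos)
  moreover have "(\<Prod>i<m. mu i powr c i) / (\<Prod>i<m. lam i powr c i) \<le> det_poly m v mu"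
    by (rule prod_powr_le_det_poly_if_decomposition[OF c_sum lam_pos mu_pos t_nonneg c_eq t_eq])
  ultimately show "BL_ratio m v c lam \<le> BL_ratio m v c mu"
    unfolding BL_ratio_eq_det_poly det_poly_lam by (simp add: field_simps)
qed

lemma stationary_point_affine_times_powr:
  fixes A B c x :: real
  assumes x_pos: "x > 0"
    and min: "\<And>y. y > 0 \<Longrightarrow> (A + x * B) * x powr - c \<le> (A + y * B) * y powr - c"
  shows "x * B = c * (A + x * B)"
proof -
  define g where "g y = (A + y * B) * y powr - c" for y
  have deriv: "(g has_real_derivative B * x powr - c + (A + x * B) * (- c * x powr (- c - 1))) (at x)"
    unfolding g_def using x_pos by (auto intro!: derivative_eq_intros)
  have local_min: "\<forall>y. \<bar>x - y\<bar> < x \<longrightarrow> g x \<le> g y"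
    using min unfolding g_def by force
  have "B * x powr - c + (A + x * B) * (- c * x powr (- c - 1)) = 0"
    by (rule DERIV_local_min[OF deriv x_pos local_min])
  then have "(B * x powr - c + (A + x * B) * (- c * x powr (- c - 1))) * x powr (c + 1) = 0"
    by simp
  then have "B * (x powr - c * x powr (c + 1)) - c * (A + x * B) * (x powr (- c - 1) * x powr (c + 1)) = 0"
    by (simp add: algebra_simps)
  moreover have "x powr - c * x powr (c + 1) = x" "x powr (- c - 1) * x powr (c + 1) = 1"
    using x_pos by (simp_all add: powr_add[symmetric])
  ultimately show ?thesis
    by (simp add: mult.commute)
qed

lemma prod_fun_upd:
  assumes "finite I"
  shows "prod (f(i := s)) I = (if i \<in> I then s * prod f (I - {i}) else prod f I)"
  using assms by (auto simp: prod.remove intro!: prod.cong)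

lemma det_poly_fun_upd:
  fixes v :: "nat \<Rightarrow> real^'n"
  obtains A B where "\<And>s. det_poly m v (lam(i := s)) = A + s * B"
    and "lam i * B = (\<Sum>I\<in>card_subsets m CARD('n). dI v I * prod lam I * indicator I i)"
proof
  let ?T = "card_subsets m CARD('n)"
  define A where "A = (\<Sum>I\<in>?T. if i \<in> I then 0 else dI v I * prod lam I)"
  define B where "B = (\<Sum>I\<in>?T. if i \<in> I then dI v I * prod lam (I - {i}) else 0)"
  have prod_upd: "prod (lam(i := s)) I = (if i \<in> I then s * prod lam (I - {i}) else prod lam I)"
    if "I \<in> ?T" for I s
    using that finite_subset by (intro prod_fun_upd) auto
  show "det_poly m v (lam(i := s)) = A + s * B" for s
    unfolding det_poly_def A_def B_def sum_distrib_left sum.distrib[symmetric]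
    by (intro sum.cong refl) (simp add: prod_upd del: fun_upd_apply)
  show "lam i * B = (\<Sum>I\<in>?T. dI v I * prod lam I * indicator I i)"
    unfolding B_def sum_distrib_left
  proof (intro sum.cong refl)
    fix I assume "I \<in> ?T"
    then have "finite I"
      using finite_subset by auto
    then show "lam i * (if i \<in> I then dI v I * prod lam (I - {i}) else 0) =
        dI v I * prod lam I * indicator I i"
      by (simp add: prod.remove indicator_def)
  qed
qed

lemma BL_ratio_minimal_stationary:
  fixes v :: "nat \<Rightarrow> real^'n"
  assumes lam_pos: "\<forall>i<m. lam i > 0"
    and min: "\<forall>mu. (\<forall>i<m. mu i > 0) \<longrightarrow> BL_ratio m v c lam \<le> BL_ratio m v c mu"
    and i: "i < m"
  shows "c i * det_poly m v lam =
    (\<Sum>I\<in>card_subsets m CARD('n). dI v I * prod lam I * indicator I i)"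
proof -
  obtain A B where det_poly_upd: "\<And>s. det_poly m v (lam(i := s)) = A + s * B"
    and B: "lam i * B = (\<Sum>I\<in>card_subsets m CARD('n). dI v I * prod lam I * indicator I i)"
    using det_poly_fun_upd[where m = m and v = v and lam = lam and i = i] by blast
  define K where "K = (\<Prod>j\<in>{..<m} - {i}. lam j powr c j)"
  have K_pos: "K > 0"
    unfolding K_def using lam_pos by (intro prod_pos) auto
  have "(\<Prod>j<m. (lam(i := s)) j powr c j) = s powr c i * K" for s
    unfolding K_def using i by (simp add: prod.remove[of _ i] del: fun_upd_apply) (auto intro!: prod.cong)
  then have ratio_upd: "BL_ratio m v c (lam(i := s)) = (A + s * B) * s powr - c i / K" if "s > 0" for s
    using that K_pos by (simp add: BL_ratio_eq_det_poly det_poly_upd powr_minus field_simps)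
  have "(A + lam i * B) * lam i powr - c i \<le> (A + y * B) * y powr - c i" if "y > 0" for y
  proof -
    have "BL_ratio m v c (lam(i := lam i)) \<le> BL_ratio m v c (lam(i := y))"
      using min lam_pos that by simp
    then show ?thesis
      using ratio_upd[OF that] ratio_upd[of "lam i"] lam_pos i K_pos by (simp add: divide_le_cancel)
  qed
  then have "lam i * B = c i * (A + lam i * B)"
    using lam_pos i by (intro stationary_point_affine_times_powr) auto
  then show ?thesis
    using det_poly_upd[of "lam i"] B by simp
qed

lemma decomposition_if_stationary:
  fixes v :: "nat \<Rightarrow> real^'n"
  assumes lam_pos: "\<forall>i<m. lam i > 0" and P_pos: "det_poly m v lam > 0"
    and stationary: "\<forall>i<m. c i * det_poly m v lam =
      (\<Sum>I\<in>card_subsets m CARD('n). dI v I * prod lam I * indicator I i)"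
  shows "\<exists>t lam'. (\<forall>i<m. lam' i > 0) \<and>
    (\<forall>I. I \<subseteq> {..<m} \<and> card I = CARD('n) \<longrightarrow> t I \<ge> 0) \<and>
    (\<forall>i<m. c i = (\<Sum>I\<in>card_subsets m CARD('n). t I * indicator I i)) \<and>
    (\<forall>I. I \<subseteq> {..<m} \<and> card I = CARD('n) \<longrightarrow> t I = dI v I * prod lam' I)"
proof -
  let ?T = "card_subsets m CARD('n)"
  let ?P = "det_poly m v lam"
  define s where "s = root CARD('n) (1 / ?P)"
  have s_pos: "s > 0"
    unfolding s_def using P_pos by simp
  have s_pow: "s ^ CARD('n) = 1 / ?P"
    unfolding s_def using P_pos by (simp add: real_root_pow_pos)
  define lam' where "lam' j = s * lam j" for j
  define t where "t I = dI v I * prod lam' I" for I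
  have t_I: "t I = dI v I * prod lam I / ?P" if "I \<in> ?T" for I
    using that s_pow by (simp add: t_def lam'_def prod.distrib)
  have "\<forall>i<m. lam' i > 0"
    using lam_pos s_pos by (simp add: lam'_def)
  moreover have "\<forall>I. I \<subseteq> {..<m} \<and> card I = CARD('n) \<longrightarrow> t I \<ge> 0"
  proof (intro allI impI)
    fix I assume I: "I \<subseteq> {..<m} \<and> card I = CARD('n)"
    then show "t I \<ge> 0"
      using lam_pos P_pos unfolding t_I[simplified, OF I]
      by (intro divide_nonneg_pos mult_nonneg_nonneg dI_nonneg prod_nonneg) (auto simp: less_imp_le)
  qed
  moreover have "\<forall>i<m. c i = (\<Sum>I\<in>?T. t I * indicator I i)"
  proof (intro allI impI)
    fix i assume "i < m"
    have "(\<Sum>I\<in>?T. t I * indicator I i) = (\<Sum>I\<in>?T. dI v I * prod lam I * indicator I i) / ?P"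
      unfolding sum_divide_distrib by (intro sum.cong refl) (simp add: t_I)
    also have "\<dots> = c i"
      using stationary \<open>i < m\<close> P_pos by (simp add: divide_eq_eq)
    finally show "c i = (\<Sum>I\<in>?T. t I * indicator I i)" ..
  qed
  moreover have "\<forall>I. t I = dI v I * prod lam' I"
    by (simp add: t_def)
  ultimately show ?thesis
    by blast
qed

theorem proposition4:
  fixes v :: "nat \<Rightarrow> real^'n" and c :: "nat \<Rightarrow> real" and m :: nat
  assumes nz: "\<forall>i<m. v i \<noteq> 0"
    and spans: "span (v ` {..<m}) = UNIV"
    and mn: "m \<ge> CARD('n)"
    and cpos: "\<forall>i<m. c i > 0"
    and csum: "(\<Sum>i<m. c i) = real CARD('n)"
  shows "(\<exists>lam. (\<forall>i<m. lam i > 0) \<and> BL_ratio m v c lam = D_const m v c)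
     \<longleftrightarrow>
     (\<exists>(t :: nat set \<Rightarrow> real) lam.
        (\<forall>i<m. lam i > 0) \<and>
        (\<forall>I. I \<subseteq> {..<m} \<and> card I = CARD('n) \<longrightarrow> t I \<ge> 0) \<and>
        (\<forall>i<m. c i = (\<Sum>I\<in>{I. I \<subseteq> {..<m} \<and> card I = CARD('n)}. t I * indicator I i)) \<and>
        (\<forall>I. I \<subseteq> {..<m} \<and> card I = CARD('n) \<longrightarrow> t I = dI v I * (\<Prod>i\<in>I. lam i)))"
proof (intro iffI; elim exE conjE)
  fix lam assume lam_pos: "\<forall>i<m. lam i > 0" and "BL_ratio m v c lam = D_const m v c"
  then have "\<forall>mu. (\<forall>i<m. mu i > 0) \<longrightarrow> BL_ratio m v c lam \<le> BL_ratio m v c mu"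
    by (simp add: BL_ratio_eq_D_const_iff)
  then have "\<forall>i<m. c i * det_poly m v lam =
      (\<Sum>I\<in>card_subsets m CARD('n). dI v I * prod lam I * indicator I i)"
    using BL_ratio_minimal_stationary[OF lam_pos] by blast
  then show "\<exists>t lam. (\<forall>i<m. lam i > 0) \<and>
      (\<forall>I. I \<subseteq> {..<m} \<and> card I = CARD('n) \<longrightarrow> t I \<ge> 0) \<and>
      (\<forall>i<m. c i = (\<Sum>I\<in>card_subsets m CARD('n). t I * indicator I i)) \<and>
      (\<forall>I. I \<subseteq> {..<m} \<and> card I = CARD('n) \<longrightarrow> t I = dI v I * prod lam I)"
    by (rule decomposition_if_stationary[OF lam_pos det_poly_pos[OF spans lam_pos]])
next
  fix t lam assume lam_pos: "\<forall>i<m. lam i > 0"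
    and "\<forall>I. I \<subseteq> {..<m} \<and> card I = CARD('n) \<longrightarrow> t I \<ge> 0"
    and c_eq: "\<forall>i<m. c i = (\<Sum>I\<in>card_subsets m CARD('n). t I * indicator I i)"
    and "\<forall>I. I \<subseteq> {..<m} \<and> card I = CARD('n) \<longrightarrow> t I = dI v I * prod lam I"
  then have "\<forall>mu. (\<forall>i<m. mu i > 0) \<longrightarrow> BL_ratio m v c lam \<le> BL_ratio m v c mu"
    by (intro BL_ratio_minimal_if_decomposition[OF csum lam_pos _ c_eq]) auto
  then show "\<exists>lam. (\<forall>i<m. lam i > 0) \<and> BL_ratio m v c lam = D_const m v c"
    using lam_pos BL_ratio_eq_D_const_iff by blast
qed

end
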